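(* Let $\mathcal{S}$ be a square-free staged tree containing a saturated subtree $\mathcal{T}$ rooted at a situation $s$, and let $\mathcal{S}'$ be the staged tree obtained by the resize operator that contracts $\mathcal{T}$ into a floret $\mathcal{F}$. Let $\alpha>0$, let $\mathcal{D}=(N_\lambda)_{\lambda\in\Lambda(\mathcal{S})}$ be a complete data sample on $\mathcal{S}$ and $\mathcal{D}'$ the sample on $\mathcal{S}'$ obtained by transferring each $N_\lambda$ to the corresponding root-to-leaf path of $\mathcal{S}'$. Then $\mathrm{BDepu}(\mathcal{S},\mathcal{D};\alpha)=\mathrm{BDepu}(\mathcal{S}',\mathcal{D}';\alpha)$.
   Context: An event tree is a finite directed rooted tree whose edges are directed away from the root; nodes with no outgoing edges are leaves, all other nodes are situations. A staged tree $\mathcal{S}$ is an event tree together with a partition of its situations into stages $u_1,\dots,u_J$ such that all situations in $u_j$ have the same number $r_j$ of outgoing edges, labelled $1,\dots,r_j$ at each situation of $u_j$; the $k$-th edge of every situation in $u_j$ carries the same conditional transition probability $\theta_{jk}$. A staged tree is square-free if no two situations on the same root-to-leaf path lie in the same stage. $\Lambda(\mathcal{S})$ is the set of root-to-leaf paths and, for an edge $e$, $\Lambda(e)$ is the set of root-to-leaf paths containing $e$. Resize: a subtree $\mathcal{T}$ rooted at a situation $s$ consists of $s$, some of its descendants and the edges between them, such that with every non-subleaf node it contains all of its outgoing edges; its subleaves are its nodes having no outgoing edges within $\mathcal{T}$. $\mathcal{T}$ is saturated if every situation of $\mathcal{T}$ that is not a subleaf forms a stage by itself (a singleton stage occurring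 nowhere else in $\mathcal{S}$). The resize operator contracts $\mathcal{T}$ into a floret $\mathcal{F}$: $s$ is given one outgoing edge for each root-to-subleaf path of $\mathcal{T}$, entering the corresponding subleaf (with everything below the subleaf unchanged), with transition probability equal to the product of the transition probabilities along that path; the root of $\mathcal{F}$ forms a singleton stage. This induces a bijection between the root-to-leaf paths of $\mathcal{S}$ and of the resulting staged tree $\mathcal{S}'$. A complete data sample $\mathcal{D}$ assigns to each root-to-leaf path $\lambda$ a number $N_\lambda\ge 0$ of units. For stage $u_j$, $n_{jk}$ is the number of units whose path passes through the $k$-th outgoing edge of some situation in $u_j$, $\overline{n}_j=\sum_k n_{jk}$. The BDepu score with imaginary sample size $\alpha>0$ is $$\mathrm{BDepu}(\mathcal{S},\mathcal{D};\alpha)=\prod_{j=1}^{J}\left[\frac{\Gamma(\overline{\alpha}_j)}{\Gamma(\overline{\alpha}_j+\overline{n}_j)}\prod_{k=1}^{r_j}\frac{\Gamma(\alpha_{jk}+n_{jk})}{\Gamma(\alpha_{jk})}\right],\quad \alpha_{jk}=\frac{\alpha}{|\Lambda(\mathcal{S})|}\sum_{m=1}^{h_j}|\Lambda(e^m_{jk})|,\quad \overline{\alpha}_j=\sum_{k=1}^{r_j}\alpha_{jk},$$ where $h_j$ is the number of situations in $u_j$ and $e^m_{jk}$ is the $k$-th outgoing edge of the $m$-th situation of $u_j$. *)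

theory Defs
  imports "HOL-Analysis.Analysis"
begin

definition children :: "('a \<times> 'a) set \<Rightarrow> 'a \<Rightarrow> 'a set" where
  "children E v = {w. (v, w) \<in> E}"

definition event_tree :: "'a set \<Rightarrow> ('a \<times> 'a) set \<Rightarrow> 'a \<Rightarrow> bool" where
  "event_tree V E r \<longleftrightarrow> finite V \<and> r \<in> V \<and> E \<subseteq> V \<times> V
     \<and> (\<forall>v. (v, r) \<notin> E)
     \<and> (\<forall>w\<in>V - {r}. \<exists>!v. (v, w) \<in> E)
     \<and> (\<forall>v\<in>V. (r, v) \<in> E\<^sup>*)"

definition situations :: "('a \<times> 'a) set \<Rightarrow> 'a set" where
  "situations E = {v. children E v \<noteq> {}}"

definition rl_paths :: "('a \<times> 'a) set \<Rightarrow> 'a \<Rightarrow> 'a list set" where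
  "rl_paths E r = {xs. xs \<noteq> [] \<and> hd xs = r
      \<and> (\<forall>i. Suc i < length xs \<longrightarrow> (xs ! i, xs ! Suc i) \<in> E)
      \<and> children E (last xs) = {}}"

definition path_edges :: "'a list \<Rightarrow> ('a \<times> 'a) set" where
  "path_edges xs = set (zip xs (tl xs))"

definition paths_through :: "('a \<times> 'a) set \<Rightarrow> 'a \<Rightarrow> 'a \<times> 'a \<Rightarrow> 'a list set" where
  "paths_through E r e = {xs \<in> rl_paths E r. e \<in> path_edges xs}"

text \<open>The stage partition is given by a function stg on situations (two situations are
  in the same stage iff they have the same stg value); lab labels the outgoing edges of
  every situation bijectively by 1..(number of outgoing edges).\<close>
definition staged_tree ::
  "'a set \<Rightarrow> ('a \<times> 'a) set \<Rightarrow> 'a \<Rightarrow> ('a \<Rightarrow> 'b) \<Rightarrow> ('a \<times> 'a \<Rightarrow> nat) \<Rightarrow> bool" where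
  "staged_tree V E r stg lab \<longleftrightarrow> event_tree V E r
     \<and> (\<forall>v\<in>situations E. \<forall>w\<in>situations E. stg v = stg w \<longrightarrow>
            card (children E v) = card (children E w))
     \<and> (\<forall>v\<in>situations E. bij_betw (\<lambda>w. lab (v, w)) (children E v) {1..card (children E v)})"

definition square_free :: "('a \<times> 'a) set \<Rightarrow> 'a \<Rightarrow> ('a \<Rightarrow> 'b) \<Rightarrow> bool" where
  "square_free E r stg \<longleftrightarrow> (\<forall>xs\<in>rl_paths E r. \<forall>i j. i < length xs \<and> j < length xs \<and> i \<noteq> j
       \<and> xs ! i \<in> situations E \<and> xs ! j \<in> situations E \<longrightarrow> stg (xs ! i) \<noteq> stg (xs ! j))"

definition stages :: "('a \<times> 'a) set \<Rightarrow> ('a \<Rightarrow> 'b) \<Rightarrow> 'b set" where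
  "stages E stg = stg ` situations E"

definition stage_members :: "('a \<times> 'a) set \<Rightarrow> ('a \<Rightarrow> 'b) \<Rightarrow> 'b \<Rightarrow> 'a set" where
  "stage_members E stg j = {v \<in> situations E. stg v = j}"

definition stage_deg :: "('a \<times> 'a) set \<Rightarrow> ('a \<Rightarrow> 'b) \<Rightarrow> 'b \<Rightarrow> nat" where
  "stage_deg E stg j = card (children E (SOME v. v \<in> stage_members E stg j))"

definition stage_edges ::
  "('a \<times> 'a) set \<Rightarrow> ('a \<Rightarrow> 'b) \<Rightarrow> ('a \<times> 'a \<Rightarrow> nat) \<Rightarrow> 'b \<Rightarrow> nat \<Rightarrow> ('a \<times> 'a) set" where
  "stage_edges E stg lab j k = {e \<in> E. fst e \<in> stage_members E stg j \<and> lab e = k}"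

definition count_n ::
  "('a \<times> 'a) set \<Rightarrow> 'a \<Rightarrow> ('a \<Rightarrow> 'b) \<Rightarrow> ('a \<times> 'a \<Rightarrow> nat) \<Rightarrow> ('a list \<Rightarrow> nat) \<Rightarrow> 'b \<Rightarrow> nat \<Rightarrow> nat" where
  "count_n E r stg lab N j k =
     (\<Sum>xs\<in>{xs \<in> rl_paths E r. path_edges xs \<inter> stage_edges E stg lab j k \<noteq> {}}. N xs)"

definition alpha_jk ::
  "('a \<times> 'a) set \<Rightarrow> 'a \<Rightarrow> ('a \<Rightarrow> 'b) \<Rightarrow> ('a \<times> 'a \<Rightarrow> nat) \<Rightarrow> real \<Rightarrow> 'b \<Rightarrow> nat \<Rightarrow> real" where
  "alpha_jk E r stg lab \<alpha> j k =
     \<alpha> / real (card (rl_paths E r)) *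
       (\<Sum>e\<in>stage_edges E stg lab j k. real (card (paths_through E r e)))"

definition BDepu ::
  "('a \<times> 'a) set \<Rightarrow> 'a \<Rightarrow> ('a \<Rightarrow> 'b) \<Rightarrow> ('a \<times> 'a \<Rightarrow> nat) \<Rightarrow> real \<Rightarrow> ('a list \<Rightarrow> nat) \<Rightarrow> real" where
  "BDepu E r stg lab \<alpha> N =
     (\<Prod>j\<in>stages E stg.
        (let rj = stage_deg E stg j;
             abar = (\<Sum>k=1..rj. alpha_jk E r stg lab \<alpha> j k);
             nbar = (\<Sum>k=1..rj. real (count_n E r stg lab N j k))
         in Gamma abar / Gamma (abar + nbar) *
            (\<Prod>k=1..rj. Gamma (alpha_jk E r stg lab \<alpha> j k + real (count_n E r stg lab N j k))
                          / Gamma (alpha_jk E r stg lab \<alpha> j k))))"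

definition subleaves :: "('a \<times> 'a) set \<Rightarrow> 'a set \<Rightarrow> 'a set" where
  "subleaves E T = {v \<in> T. children E v \<inter> T = {}}"

text \<open>We require s itself not to be a subleaf (the subtree is non-trivial).\<close>
definition subtree :: "'a set \<Rightarrow> ('a \<times> 'a) set \<Rightarrow> 'a \<Rightarrow> 'a set \<Rightarrow> bool" where
  "subtree V E s T \<longleftrightarrow> s \<in> situations E \<and> T \<subseteq> V \<and> s \<in> T
     \<and> (\<forall>v\<in>T. (s, v) \<in> E\<^sup>*)
     \<and> (\<forall>v\<in>T - {s}. \<exists>u\<in>T. (u, v) \<in> E)
     \<and> (\<forall>v\<in>T. children E v \<subseteq> T \<or> children E v \<inter> T = {})
     \<and> s \<notin> subleaves E T"

definition saturated :: "('a \<times> 'a) set \<Rightarrow> ('a \<Rightarrow> 'b) \<Rightarrow> 'a set \<Rightarrow> bool" where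
  "saturated E stg T \<longleftrightarrow>
     (\<forall>v\<in>T - subleaves E T. \<forall>w\<in>situations E. stg w = stg v \<longrightarrow> w = v)"

definition interior :: "('a \<times> 'a) set \<Rightarrow> 'a \<Rightarrow> 'a set \<Rightarrow> 'a set" where
  "interior E s T = T - {s} - subleaves E T"

definition resize_nodes :: "'a set \<Rightarrow> ('a \<times> 'a) set \<Rightarrow> 'a \<Rightarrow> 'a set \<Rightarrow> 'a set" where
  "resize_nodes V E s T = V - interior E s T"

definition resize_edges :: "('a \<times> 'a) set \<Rightarrow> 'a \<Rightarrow> 'a set \<Rightarrow> ('a \<times> 'a) set" where
  "resize_edges E s T = {e \<in> E. fst e \<notin> T - subleaves E T} \<union> {(s, l) | l. l \<in> subleaves E T}"

text \<open>The bijection of root-to-leaf paths induced by the resize: drop the interior nodes.\<close>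
definition contract_path :: "('a \<times> 'a) set \<Rightarrow> 'a \<Rightarrow> 'a set \<Rightarrow> 'a list \<Rightarrow> 'a list" where
  "contract_path E s T xs = filter (\<lambda>x. x \<notin> interior E s T) xs"

end

theory Submission
  imports Defs
begin

(* Resizing leaves every stage outside the subtree untouched, together with its edges and labels,
   and contracting paths is a bijection that preserves which paths visit a node outside the
   interior of the subtree; so the factors of the score for these stages agree.
   The remaining stages are singletons. For a node w let G(w) = Gamma(a(w) + m(w)) / Gamma(a(w)),
   where a(w) is alpha / |Lambda| times the number of paths through w and m(w) is the number of
   units through w. Both are additive over the children of a situation, so the factor of the
   singleton stage of v is G(v)^-1 times the product of G over the children of v. Over the
   non-subleaf nodes of the subtree this product telescopes to G(s)^-1 times the product of G over
   the subleaves, which is the factor of the root of the floret. *)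

section \<open>Root-to-leaf paths\<close>

(* Unlike event_tree this mentions no node set, so it applies directly to the resized edges. *)
definition parent_unique :: "('a \<times> 'a) set \<Rightarrow> 'a \<Rightarrow> bool" where
  "parent_unique E r \<longleftrightarrow>
     (\<forall>v. (v, r) \<notin> E) \<and>
     (\<forall>u1 u2 w. (u1, w) \<in> E \<longrightarrow> (u2, w) \<in> E \<longrightarrow> u1 = u2)"

abbreviation walk :: "('a \<times> 'a) set \<Rightarrow> 'a list \<Rightarrow> bool" where
  "walk E xs \<equiv> successively (\<lambda>x y. (x, y) \<in> E) xs"

definition paths_visiting :: "('a \<times> 'a) set \<Rightarrow> 'a \<Rightarrow> 'a set \<Rightarrow> 'a list set" where
  "paths_visiting E r W = {xs \<in> rl_paths E r. set xs \<inter> W \<noteq> {}}"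

lemma event_tree_parent_unique: "event_tree V E r \<Longrightarrow> parent_unique E r"
  unfolding event_tree_def parent_unique_def by blast

lemma rl_paths_iff:
  "xs \<in> rl_paths E r \<longleftrightarrow> xs \<noteq> [] \<and> hd xs = r \<and> walk E xs \<and> children E (last xs) = {}"
  unfolding rl_paths_def successively_conv_nth by auto

lemma in_path_edges_iff:
  "e \<in> path_edges xs \<longleftrightarrow> (\<exists>i. Suc i < length xs \<and> e = (xs ! i, xs ! Suc i))"
  unfolding path_edges_def in_set_zip
  by (cases e) (auto simp: nth_tl, metis Suc_lessD less_diff_conv add_Suc_right add_0_right)

lemma walk_snoc_iff:
  "walk E (xs @ [x]) \<longleftrightarrow> walk E xs \<and> (xs \<noteq> [] \<longrightarrow> (last xs, x) \<in> E)"
  by (auto simp: successively_append_iff)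

lemma root_walks_eq_if_last_eq:
  assumes pu: "parent_unique E r"
  shows "\<lbrakk>walk E xs; walk E ys; xs \<noteq> []; ys \<noteq> []; hd xs = r; hd ys = r; last xs = last ys\<rbrakk>
    \<Longrightarrow> xs = ys"
proof (induction xs arbitrary: ys rule: rev_induct)
  case (snoc x xs)
  obtain ys' where ys: "ys = ys' @ [x]"
    using snoc.prems(4,7) by (cases ys rule: rev_cases) auto
  have walks: "walk E xs" "walk E ys'"
    and edges: "xs \<noteq> [] \<Longrightarrow> (last xs, x) \<in> E" "ys' \<noteq> [] \<Longrightarrow> (last ys', x) \<in> E"
    using snoc.prems(1,2) ys by (simp_all add: walk_snoc_iff)
  have root_no_parent: "(v, r) \<notin> E" for v using pu unfolding parent_unique_def by blast
  show ?case
  proof (cases "xs = [] \<or> ys' = []")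
    case True
    then have "x = r" using snoc.prems(5,6) ys by auto
    then have "xs = [] \<and> ys' = []" using True edges root_no_parent by blast
    then show ?thesis using ys by simp
  next
    case False
    then have "last xs = last ys'"
      using edges pu unfolding parent_unique_def by blast
    then show ?thesis
      using snoc.IH[OF walks(1) walks(2)] snoc.prems(5,6) False ys by simp
  qed
qed simp

lemma root_walk_distinct:
  assumes pu: "parent_unique E r"
  shows "\<lbrakk>walk E xs; hd xs = r\<rbrakk> \<Longrightarrow> distinct xs"
proof (induction xs rule: rev_induct)
  case (snoc x xs)
  have "x \<notin> set xs"
  proof
    assume "x \<in> set xs"
    then obtain as bs where xs: "xs = as @ x # bs" by (meson split_list)
    have "as @ [x] = xs @ [x]"
      by (rule root_walks_eq_if_last_eq[OF pu])
        (use snoc.prems xs in \<open>auto simp: successively_append_iff hd_append\<close>)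
    then show False using xs by simp
  qed
  moreover have "distinct xs"
    using snoc by (cases "xs = []") (auto simp: walk_snoc_iff)
  ultimately show ?case by simp
qed simp

lemma rl_paths_eq_if_last_eq:
  "\<lbrakk>parent_unique E r; xs \<in> rl_paths E r; ys \<in> rl_paths E r; last xs = last ys\<rbrakk> \<Longrightarrow> xs = ys"
  unfolding rl_paths_iff by (metis root_walks_eq_if_last_eq)

lemma last_rl_path_cases:
  assumes "xs \<in> rl_paths E r"
  obtains "last xs = r" | u where "(u, last xs) \<in> E"
proof -
  have xs: "xs = butlast xs @ [last xs]" "hd xs = r" "walk E xs"
    using assms by (simp_all add: rl_paths_iff)
  show ?thesis
  proof (cases "butlast xs = []")
    case True
    then show ?thesis using xs that(1) by (metis append_Nil list.sel(1))
  next
    case False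
    then show ?thesis using xs that(2) by (metis walk_snoc_iff)
  qed
qed

lemma edge_in_path_edges_iff:
  assumes pu: "parent_unique E r" and xs: "xs \<in> rl_paths E r" and e: "(u, w) \<in> E"
  shows "(u, w) \<in> path_edges xs \<longleftrightarrow> w \<in> set xs"
proof
  assume "(u, w) \<in> path_edges xs"
  then show "w \<in> set xs" unfolding in_path_edges_iff by auto
next
  assume "w \<in> set xs"
  then obtain k where k: "k < length xs" "xs ! k = w" by (auto simp: in_set_conv_nth)
  have walk: "walk E xs" and "xs ! 0 = r"
    using xs by (auto simp: rl_paths_iff hd_conv_nth)
  moreover have "w \<noteq> r" using e pu unfolding parent_unique_def by auto
  ultimately obtain i where i: "k = Suc i" using k by (cases k) auto
  then have "(xs ! i, w) \<in> E" using successively_nth[OF walk] k by auto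
  then have "xs ! i = u" using e pu unfolding parent_unique_def by auto
  then show "(u, w) \<in> path_edges xs" unfolding in_path_edges_iff using k i by auto
qed

lemma paths_through_eq_paths_visiting:
  "\<lbrakk>parent_unique E r; e \<in> E\<rbrakk> \<Longrightarrow> paths_through E r e = paths_visiting E r {snd e}"
  using edge_in_path_edges_iff[of E r _ "fst e" "snd e"]
  unfolding paths_through_def paths_visiting_def by auto

lemma paths_meeting_edges_eq_paths_visiting:
  assumes pu: "parent_unique E r" and "S \<subseteq> E"
  shows "{xs \<in> rl_paths E r. path_edges xs \<inter> S \<noteq> {}} = paths_visiting E r (snd ` S)"
proof -
  have "e \<in> path_edges xs \<longleftrightarrow> snd e \<in> set xs" if "xs \<in> rl_paths E r" "e \<in> S" for xs e
    using edge_in_path_edges_iff[OF pu that(1), of "fst e" "snd e"] that(2) assms(2) by auto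
  then show ?thesis unfolding paths_visiting_def by blast
qed

lemma paths_visiting_situation:
  assumes pu: "parent_unique E r" and v: "v \<in> situations E"
  shows "paths_visiting E r {v} = (\<Union>w\<in>children E v. paths_visiting E r {w})"
proof (intro equalityI subsetI)
  fix xs assume "xs \<in> paths_visiting E r {v}"
  then have xs: "xs \<in> rl_paths E r" "v \<in> set xs" unfolding paths_visiting_def by auto
  then obtain as bs where split: "xs = as @ v # bs" by (meson split_list)
  have "bs \<noteq> []" using xs split v unfolding rl_paths_iff situations_def by auto
  moreover have "walk E (v # bs)" using xs split by (simp add: rl_paths_iff successively_append_iff)
  ultimately have "(v, hd bs) \<in> E" by (cases bs) auto
  moreover have "hd bs \<in> set xs" using split \<open>bs \<noteq> []\<close> by auto
  ultimately show "xs \<in> (\<Union>w\<in>children E v. paths_visiting E r {w})"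
    using xs unfolding paths_visiting_def children_def by auto
next
  fix xs assume "xs \<in> (\<Union>w\<in>children E v. paths_visiting E r {w})"
  then obtain w where w: "(v, w) \<in> E" "xs \<in> rl_paths E r" "w \<in> set xs"
    unfolding paths_visiting_def children_def by auto
  then have "(v, w) \<in> path_edges xs" using edge_in_path_edges_iff[OF pu] by blast
  then have "v \<in> set xs" unfolding in_path_edges_iff by auto
  then show "xs \<in> paths_visiting E r {v}" using w unfolding paths_visiting_def by auto
qed

lemma children_disjoint:
  "\<lbrakk>parent_unique E r; v1 \<noteq> v2\<rbrakk> \<Longrightarrow> children E v1 \<inter> children E v2 = {}"
  unfolding parent_unique_def children_def by auto

lemma paths_visiting_children_disjoint:
  assumes pu: "parent_unique E r"
    and w: "w1 \<in> children E v" "w2 \<in> children E v" "w1 \<noteq> w2"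
  shows "paths_visiting E r {w1} \<inter> paths_visiting E r {w2} = {}"
proof (rule ccontr)
  assume "paths_visiting E r {w1} \<inter> paths_visiting E r {w2} \<noteq> {}"
  then obtain xs where xs: "xs \<in> rl_paths E r" "w1 \<in> set xs" "w2 \<in> set xs"
    unfolding paths_visiting_def by auto
  have "(v, w1) \<in> path_edges xs" "(v, w2) \<in> path_edges xs"
    using edge_in_path_edges_iff[OF pu xs(1)] xs w unfolding children_def by auto
  then obtain i j where i: "Suc i < length xs" "xs ! i = v" "xs ! Suc i = w1"
    and j: "Suc j < length xs" "xs ! j = v" "xs ! Suc j = w2"
    unfolding in_path_edges_iff by auto
  have "distinct xs" using root_walk_distinct[OF pu] xs(1) by (auto simp: rl_paths_iff)
  then have "i = j" using i j by (metis Suc_lessD nth_eq_iff_index_eq)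
  then show False using i j w by simp
qed

lemma finite_paths_visiting: "finite (rl_paths E r) \<Longrightarrow> finite (paths_visiting E r W)"
  unfolding paths_visiting_def by simp

lemma sum_paths_visiting_situation:
  assumes "parent_unique E r" "finite (rl_paths E r)" "finite (children E v)" "v \<in> situations E"
  shows "(\<Sum>xs\<in>paths_visiting E r {v}. f xs)
    = (\<Sum>w\<in>children E v. \<Sum>xs\<in>paths_visiting E r {w}. f xs)"
  unfolding paths_visiting_situation[OF assms(1,4)]
  by (rule sum.UNION_disjoint)
    (simp_all add: assms finite_paths_visiting paths_visiting_children_disjoint[OF assms(1)])

lemma card_paths_visiting_situation:
  assumes "parent_unique E r" "finite (rl_paths E r)" "finite (children E v)" "v \<in> situations E"
  shows "card (paths_visiting E r {v}) = (\<Sum>w\<in>children E v. card (paths_visiting E r {w}))"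
  using sum_paths_visiting_situation[OF assms, of "\<lambda>_. 1"] by (simp only: card_eq_sum)

lemma rtrancl_imp_walk:
  "(a, b) \<in> E\<^sup>* \<Longrightarrow> \<exists>xs. xs \<noteq> [] \<and> hd xs = a \<and> last xs = b \<and> walk E xs"
proof (induction rule: rtrancl_induct)
  case base
  then show ?case by (intro exI[of _ "[a]"]) auto
next
  case (step y z)
  then obtain xs where "xs \<noteq> [] \<and> hd xs = a \<and> last xs = y \<and> walk E xs" by auto
  then show ?case using step by (intro exI[of _ "xs @ [z]"]) (auto simp: walk_snoc_iff)
qed

lemma reachable_not_on_cycle:
  assumes pu: "parent_unique E r" and "(r, x) \<in> E\<^sup>*"
  shows "(x, x) \<notin> E\<^sup>+"
proof
  assume "(x, x) \<in> E\<^sup>+"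
  then obtain c where c: "(x, c) \<in> E" "(c, x) \<in> E\<^sup>*" by (auto dest: tranclD)
  obtain xs where xs: "xs \<noteq> []" "hd xs = r" "last xs = x" "walk E xs"
    using rtrancl_imp_walk[OF assms(2)] by auto
  obtain ys where ys: "ys \<noteq> []" "hd ys = c" "last ys = x" "walk E ys"
    using rtrancl_imp_walk[OF c(2)] by auto
  have "walk E (xs @ ys)" using xs ys c by (auto simp: successively_append_iff)
  then have "distinct (xs @ ys)" using root_walk_distinct[OF pu] xs by (metis hd_append2)
  moreover have "x \<in> set xs" "x \<in> set ys" using xs ys by (metis last_in_set)+
  ultimately show False by auto
qed

lemma walk_in_nodes:
  "\<lbrakk>E \<subseteq> V \<times> V; walk E xs; xs \<noteq> []; hd xs \<in> V\<rbrakk> \<Longrightarrow> set xs \<subseteq> V"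
  by (induction xs rule: induct_list012) auto

lemma finite_rl_paths:
  assumes pu: "parent_unique E r" and "finite V" "r \<in> V" "E \<subseteq> V \<times> V"
  shows "finite (rl_paths E r)"
proof -
  have "last xs \<in> V" if "xs \<in> rl_paths E r" for xs
    using that assms(3,4) by (cases rule: last_rl_path_cases) auto
  then have "last ` rl_paths E r \<subseteq> V" by auto
  moreover have "inj_on last (rl_paths E r)"
    using rl_paths_eq_if_last_eq[OF pu] by (auto intro: inj_onI)
  ultimately show ?thesis using assms(2) by (metis finite_imageD finite_subset)
qed

lemma root_walk_extends_to_rl_path:
  assumes et: "event_tree V E r"
  shows "\<lbrakk>xs \<noteq> []; hd xs = r; walk E xs\<rbrakk> \<Longrightarrow> \<exists>ys. xs @ ys \<in> rl_paths E r"
proof (induction "card V - length xs" arbitrary: xs rule: less_induct)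
  case less
  show ?case
  proof (cases "children E (last xs) = {}")
    case True
    then show ?thesis using less.prems by (intro exI[of _ "[]"]) (auto simp: rl_paths_iff)
  next
    case False
    then obtain w where w: "(last xs, w) \<in> E" unfolding children_def by auto
    have walk: "walk E (xs @ [w])" using less.prems w by (auto simp: walk_snoc_iff)
    have "distinct (xs @ [w])"
      using root_walk_distinct[OF event_tree_parent_unique[OF et] walk] less.prems by auto
    moreover have "set (xs @ [w]) \<subseteq> V"
      using walk_in_nodes[OF _ walk] et less.prems unfolding event_tree_def by auto
    ultimately have "length (xs @ [w]) \<le> card V"
      using et unfolding event_tree_def by (metis card_mono distinct_card)
    then have "card V - length (xs @ [w]) < card V - length xs" by simp
    then obtain ys where "(xs @ [w]) @ ys \<in> rl_paths E r"
      using less.hyps less.prems walk by (metis append_is_Nil_conv hd_append2)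
    then show ?thesis by (intro exI[of _ "w # ys"]) simp
  qed
qed

lemma paths_visiting_nonempty:
  assumes et: "event_tree V E r" and v: "v \<in> V"
  shows "paths_visiting E r {v} \<noteq> {}"
proof -
  have "(r, v) \<in> E\<^sup>*" using et v unfolding event_tree_def by auto
  then obtain xs where xs: "xs \<noteq> []" "hd xs = r" "last xs = v" "walk E xs"
    using rtrancl_imp_walk by metis
  then obtain ys where "xs @ ys \<in> rl_paths E r"
    using root_walk_extends_to_rl_path[OF et] by auto
  then show ?thesis using xs unfolding paths_visiting_def by auto
qed

lemma successively_filterI:
  assumes "\<And>as x bs y cs. \<lbrakk>xs = as @ x # bs @ y # cs; P x; P y; \<forall>b\<in>set bs. \<not> P b\<rbrakk>
    \<Longrightarrow> R x y"
  shows "successively R (filter P xs)"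
  using assms
proof (induction xs)
  case (Cons x xs)
  have IH: "successively R (filter P xs)"
    by (rule Cons.IH) (use Cons.prems in \<open>metis append_Cons\<close>)
  show ?case
  proof (cases "P x \<and> filter P xs \<noteq> []")
    case True
    then obtain y ys where ys: "filter P xs = y # ys" by (cases "filter P xs") auto
    then obtain us vs where "xs = us @ y # vs" "\<forall>u\<in>set us. \<not> P u" "P y"
      by (auto simp: filter_eq_Cons_iff)
    then have "R x y" using Cons.prems[of "[]" x us y vs] True by simp
    then show ?thesis using True IH ys by simp
  next
    case False
    then show ?thesis using IH by auto
  qed
qed simp

lemma last_filter_eq: "\<lbrakk>xs \<noteq> []; P (last xs)\<rbrakk> \<Longrightarrow> last (filter P xs) = last xs"
  by (metis append_butlast_last_id filter.simps filter_append last_snoc)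

section \<open>Stage factors of the score\<close>

definition stage_factor ::
  "('a \<times> 'a) set \<Rightarrow> 'a \<Rightarrow> ('a \<Rightarrow> 'b) \<Rightarrow> ('a \<times> 'a \<Rightarrow> nat) \<Rightarrow> real \<Rightarrow>
    ('a list \<Rightarrow> nat) \<Rightarrow> 'b \<Rightarrow> real"
  where
  "stage_factor E r stg lab \<alpha> N j =
     (let rj = stage_deg E stg j;
          abar = (\<Sum>k=1..rj. alpha_jk E r stg lab \<alpha> j k);
          nbar = (\<Sum>k=1..rj. real (count_n E r stg lab N j k))
      in Gamma abar / Gamma (abar + nbar) *
         (\<Prod>k=1..rj. Gamma (alpha_jk E r stg lab \<alpha> j k + real (count_n E r stg lab N j k))
                       / Gamma (alpha_jk E r stg lab \<alpha> j k)))"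

lemma BDepu_eq_prod_stage_factor:
  "BDepu E r stg lab \<alpha> N = (\<Prod>j\<in>stages E stg. stage_factor E r stg lab \<alpha> N j)"
  unfolding BDepu_def stage_factor_def by simp

(* For the edge e into w, a is the imaginary sample size alpha |Lambda(e)| / |Lambda| of e
   and m the number of units passing through e. *)
definition gamma_ratio ::
  "('a \<times> 'a) set \<Rightarrow> 'a \<Rightarrow> real \<Rightarrow> ('a list \<Rightarrow> nat) \<Rightarrow> 'a \<Rightarrow> real" where
  "gamma_ratio E r \<alpha> N w =
     (let a = \<alpha> / real (card (rl_paths E r)) * real (card (paths_visiting E r {w}));
          m = real (\<Sum>xs\<in>paths_visiting E r {w}. N xs)
      in Gamma (a + m) / Gamma a)"

lemma gamma_ratio_pos:
  assumes "\<alpha> > 0" and fin: "finite (rl_paths E r)" and ne: "paths_visiting E r {w} \<noteq> {}"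
  shows "gamma_ratio E r \<alpha> N w > 0"
proof -
  have "card (paths_visiting E r {w}) > 0"
    using finite_paths_visiting[OF fin] ne by (simp add: card_gt_0_iff)
  moreover have "card (rl_paths E r) > 0"
    using fin ne unfolding paths_visiting_def by (auto simp: card_gt_0_iff)
  ultimately have "\<alpha> / real (card (rl_paths E r)) * real (card (paths_visiting E r {w})) > 0"
    using \<open>\<alpha> > 0\<close> by simp
  then show ?thesis
    unfolding gamma_ratio_def Let_def
    by (intro divide_pos_pos Gamma_real_pos add_pos_nonneg) (simp_all add: sum_nonneg)
qed

lemma stage_factor_singleton:
  assumes pu: "parent_unique E r" and fin: "finite (rl_paths E r)" and v: "v \<in> situations E"
    and stage: "stage_members E stg (stg v) = {v}"
    and bij: "bij_betw (\<lambda>w. lab (v, w)) (children E v) {1..card (children E v)}"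
  shows "stage_factor E r stg lab \<alpha> N (stg v)
    = inverse (gamma_ratio E r \<alpha> N v) * (\<Prod>w\<in>children E v. gamma_ratio E r \<alpha> N w)"
proof -
  define \<beta> where "\<beta> = \<alpha> / real (card (rl_paths E r))"
  define a where "a w = \<beta> * real (card (paths_visiting E r {w}))" for w
  define m where "m w = real (\<Sum>xs\<in>paths_visiting E r {w}. N xs)" for w
  have fin_children: "finite (children E v)"
    using bij_betw_finite[OF bij] by simp
  have deg: "stage_deg E stg (stg v) = card (children E v)"
    unfolding stage_deg_def stage by simp
  have edges: "stage_edges E stg lab (stg v) (lab (v, w)) = {(v, w)}" if w: "w \<in> children E v" for w
  proof (intro equalityI subsetI)
    fix e assume "e \<in> stage_edges E stg lab (stg v) (lab (v, w))"
    then have e: "e \<in> E" "fst e = v" "lab e = lab (v, w)"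
      unfolding stage_edges_def stage by auto
    then have "snd e \<in> children E v" unfolding children_def by (metis mem_Collect_eq prod.collapse)
    then have "snd e = w" using e w bij unfolding bij_betw_def inj_on_def by (metis prod.collapse)
    then show "e \<in> {(v, w)}" using e by (metis prod.collapse singletonI)
  qed (use w in \<open>auto simp: stage_edges_def stage children_def\<close>)
  have alpha: "alpha_jk E r stg lab \<alpha> (stg v) (lab (v, w)) = a w" if "w \<in> children E v" for w
    using that edges paths_through_eq_paths_visiting[OF pu]
    unfolding alpha_jk_def a_def \<beta>_def children_def by auto
  have count: "real (count_n E r stg lab N (stg v) (lab (v, w))) = m w" if "w \<in> children E v" for w
    using that paths_meeting_edges_eq_paths_visiting[OF pu, of "{(v, w)}"]
    unfolding count_n_def edges[OF that] m_def children_def by simp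
  have "(\<Sum>w\<in>children E v. a w) = a v"
    unfolding a_def card_paths_visiting_situation[OF pu fin fin_children v]
    by (simp add: sum_distrib_left)
  moreover have "(\<Sum>w\<in>children E v. m w) = m v"
    unfolding m_def sum_paths_visiting_situation[OF pu fin fin_children v] by simp
  moreover have "gamma_ratio E r \<alpha> N w = Gamma (a w + m w) / Gamma (a w)" for w
    unfolding gamma_ratio_def a_def m_def \<beta>_def Let_def ..
  ultimately show ?thesis
    unfolding stage_factor_def Let_def deg
      sum.reindex_bij_betw[OF bij, symmetric] prod.reindex_bij_betw[OF bij, symmetric]
    by (simp add: alpha count cong: sum.cong prod.cong)
qed

section \<open>Contracting a subtree\<close>

locale tree_resize =
  fixes V :: "'a set" and E :: "('a \<times> 'a) set" and r :: 'a and s :: 'a and T :: "'a set"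
  assumes event_tree: "event_tree V E r" and subtree: "subtree V E s T"
begin

abbreviation "inner_nodes \<equiv> T - subleaves E T"
abbreviation "E' \<equiv> resize_edges E s T"
abbreviation "contract \<equiv> contract_path E s T"

lemma parent_unique: "parent_unique E r"
  using event_tree by (rule event_tree_parent_unique)

lemma finite_V: "finite V" and root_in_V: "r \<in> V" and edges_subset: "E \<subseteq> V \<times> V"
  and reachable: "v \<in> V \<Longrightarrow> (r, v) \<in> E\<^sup>*"
  using event_tree unfolding event_tree_def by auto

lemma subtree_subset: "T \<subseteq> V" and finite_subtree: "finite T" and root_inner: "s \<in> inner_nodes"
  and subleaves_subset: "subleaves E T \<subseteq> T"
  using subtree finite_V unfolding subtree_def subleaves_def by (auto intro: finite_subset)

lemma inner_situation: "v \<in> inner_nodes \<Longrightarrow> v \<in> situations E \<and> children E v \<subseteq> T"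
  using subtree unfolding subtree_def subleaves_def situations_def by blast

lemma parent_in_inner:
  assumes "w \<in> T" "w \<noteq> s" "(u, w) \<in> E"
  shows "u \<in> inner_nodes"
proof -
  obtain u' where u': "u' \<in> T" "(u', w) \<in> E" using subtree assms unfolding subtree_def by blast
  then have "u = u'" using assms parent_unique unfolding parent_unique_def by auto
  then show ?thesis using u' assms unfolding subleaves_def children_def by auto
qed

lemma no_edge_into_subtree_root: "v \<in> T \<Longrightarrow> (v, s) \<notin> E"
proof
  assume "v \<in> T" "(v, s) \<in> E"
  moreover have "(s, v) \<in> E\<^sup>*" using subtree \<open>v \<in> T\<close> unfolding subtree_def by auto
  ultimately have "(s, s) \<in> E\<^sup>+" by auto
  then show False
    using reachable_not_on_cycle[OF parent_unique reachable] subtree_subset root_inner by blast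
qed

lemma root_in_subtree: "r \<in> T \<Longrightarrow> r = s"
  using subtree parent_unique unfolding subtree_def parent_unique_def by auto

lemma interior_eq: "interior E s T = inner_nodes - {s}"
  unfolding interior_def by auto

lemma resize_edges_eq: "E' = {e \<in> E. fst e \<notin> inner_nodes} \<union> {(s, l) | l. l \<in> subleaves E T}"
  unfolding resize_edges_def by auto

lemma children_resize:
  "children E' v = (if v = s then subleaves E T else if v \<in> inner_nodes then {} else children E v)"
  unfolding resize_edges_eq children_def using root_inner by auto

lemma no_resize_edge_into_interior: "w \<in> interior E s T \<Longrightarrow> (u, w) \<notin> E'"
  unfolding resize_edges_eq interior_eq using parent_in_inner by auto

lemma parent_unique_resize: "parent_unique E' r"
  unfolding parent_unique_def
proof (intro conjI allI impI)
  show "(v, r) \<notin> E'" for v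
    using parent_unique root_in_subtree subleaves_subset root_inner
    unfolding resize_edges_eq parent_unique_def by auto
next
  fix u1 u2 w assume edges: "(u1, w) \<in> E'" "(u2, w) \<in> E'"
  have "u = s" if "(u, w) \<in> E'" "w \<in> subleaves E T" for u
    using that parent_in_inner subleaves_subset root_inner unfolding resize_edges_eq by auto
  then show "u1 = u2"
    using edges parent_unique unfolding resize_edges_eq parent_unique_def by blast
qed

lemma resize_edges_subset: "E' \<subseteq> V \<times> V"
  unfolding resize_edges_eq using edges_subset subtree_subset subleaves_subset root_inner by auto

lemma finite_rl_paths_E: "finite (rl_paths E r)"
  using finite_rl_paths[OF parent_unique finite_V root_in_V edges_subset] .

lemma finite_rl_paths_resize: "finite (rl_paths E' r)"
  using finite_rl_paths[OF parent_unique_resize finite_V root_in_V resize_edges_subset] .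

lemma children_inner_UN: "(\<Union>v\<in>inner_nodes. children E v) = T - {s}"
proof (intro equalityI subsetI)
  fix w assume "w \<in> (\<Union>v\<in>inner_nodes. children E v)"
  then obtain v where "v \<in> inner_nodes" "(v, w) \<in> E" unfolding children_def by auto
  then show "w \<in> T - {s}"
    using inner_situation no_edge_into_subtree_root unfolding children_def by auto
next
  fix w assume w: "w \<in> T - {s}"
  then obtain u where "u \<in> T" "(u, w) \<in> E" using subtree unfolding subtree_def by blast
  then show "w \<in> (\<Union>v\<in>inner_nodes. children E v)"
    using parent_in_inner w unfolding children_def by auto
qed

lemma finite_children: "finite (children E v)"
  using finite_V edges_subset unfolding children_def by (auto intro: finite_subset)

lemma prod_children_inner:
  "(\<Prod>v\<in>inner_nodes. \<Prod>w\<in>children E v. g w)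
    = (\<Prod>w\<in>inner_nodes - {s}. g w) * (\<Prod>l\<in>subleaves E T. g l)"
proof -
  have "(\<Prod>v\<in>inner_nodes. \<Prod>w\<in>children E v. g w) = (\<Prod>w\<in>T - {s}. g w)"
    unfolding children_inner_UN[symmetric]
    by (rule prod.UNION_disjoint[symmetric])
      (simp_all add: finite_subtree finite_children children_disjoint[OF parent_unique])
  also have "T - {s} = (inner_nodes - {s}) \<union> subleaves E T" using subleaves_subset root_inner by auto
  also have "(\<Prod>w\<in>\<dots>. g w) = (\<Prod>w\<in>inner_nodes - {s}. g w) * (\<Prod>l\<in>subleaves E T. g l)"
    by (rule prod.union_disjoint) (use finite_subtree subleaves_subset in \<open>auto intro: finite_subset\<close>)
  finally show ?thesis .
qed

lemma prod_telescope_inner: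
  fixes G :: "'a \<Rightarrow> 'b::field"
  assumes "\<And>v. v \<in> inner_nodes \<Longrightarrow> G v \<noteq> 0"
  shows "(\<Prod>v\<in>inner_nodes. inverse (G v) * (\<Prod>w\<in>children E v. G w))
    = inverse (G s) * (\<Prod>l\<in>subleaves E T. G l)"
proof -
  have "(\<Prod>v\<in>inner_nodes. inverse (G v) * (\<Prod>w\<in>children E v. G w))
      = inverse (\<Prod>v\<in>inner_nodes. G v) * (\<Prod>v\<in>inner_nodes. \<Prod>w\<in>children E v. G w)"
    by (simp add: prod.distrib prod_inversef[unfolded comp_def])
  also have "\<dots> = inverse (G s * (\<Prod>w\<in>inner_nodes - {s}. G w))
      * ((\<Prod>w\<in>inner_nodes - {s}. G w) * (\<Prod>l\<in>subleaves E T. G l))"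
    unfolding prod_children_inner using prod.remove[OF _ root_inner, of G] finite_subtree by simp
  also have "\<dots> = inverse (G s) * (\<Prod>l\<in>subleaves E T. G l)"
    using assms finite_subtree by (simp add: field_simps)
  finally show ?thesis .
qed

lemma last_rl_path_not_inner: "xs \<in> rl_paths E r \<Longrightarrow> last xs \<notin> inner_nodes"
  using inner_situation unfolding rl_paths_iff situations_def by blast

lemma walk_from_inner_meets_subleaves:
  "\<lbrakk>walk E (v # zs); v \<in> inner_nodes; last (v # zs) \<notin> inner_nodes\<rbrakk>
    \<Longrightarrow> set zs \<inter> subleaves E T \<noteq> {}"
proof (induction zs arbitrary: v)
  case (Cons z zs)
  have "z \<in> T" using Cons.prems(1,2) inner_situation unfolding children_def by auto
  then show ?case using Cons.IH[of z] Cons.prems by (cases "z \<in> inner_nodes") auto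
qed simp

lemma subleaves_nonempty: "subleaves E T \<noteq> {}"
proof -
  obtain xs where xs: "xs \<in> rl_paths E r" "s \<in> set xs"
    using paths_visiting_nonempty[OF event_tree] subtree_subset root_inner
    unfolding paths_visiting_def by blast
  then obtain as bs where split: "xs = as @ s # bs" by (meson split_list)
  have "last (s # bs) \<notin> inner_nodes" using last_rl_path_not_inner[OF xs(1)] split by simp
  moreover have "walk E (s # bs)" using xs(1) split by (simp add: rl_paths_iff successively_append_iff)
  ultimately show ?thesis using walk_from_inner_meets_subleaves root_inner by blast
qed

lemma walk_contract:
  assumes walk: "walk E xs"
  shows "walk E' (contract xs)"
  unfolding contract_path_def
proof (rule successively_filterI)
  fix as x bs y cs
  assume split: "xs = as @ x # bs @ y # cs" and x: "x \<notin> interior E s T"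
    and y: "y \<notin> interior E s T" and bs: "\<forall>b\<in>set bs. \<not> b \<notin> interior E s T"
  have "walk E (as @ ((x # bs) @ [y]) @ cs)" using walk split by simp
  then have segment: "walk E ((x # bs) @ [y])" by (metis successively_append_iff)
  then have last: "(last (x # bs), y) \<in> E" by (simp only: walk_snoc_iff) simp
  show "(x, y) \<in> E'"
  proof (cases "x \<in> inner_nodes")
    case False
    have "bs = []"
    proof (rule ccontr)
      assume "bs \<noteq> []"
      then have "(x, hd bs) \<in> E" using segment by (cases bs) simp_all
      moreover have "hd bs \<in> inner_nodes - {s}" using bs \<open>bs \<noteq> []\<close> interior_eq by auto
      ultimately show False using False parent_in_inner by blast
    qed
    then show ?thesis using last False unfolding resize_edges_eq by simp
  next
    case True
    then have "x = s" using x interior_eq by blast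
    have "last (x # bs) \<in> inner_nodes"
    proof (cases "bs = []")
      case False
      then have "last bs \<in> interior E s T" using bs by simp
      then show ?thesis using False interior_eq by simp
    qed (use True in simp)
    then have "y \<in> T" "y \<noteq> s"
      using last inner_situation[of "last (x # bs)"] no_edge_into_subtree_root[of "last (x # bs)"]
      unfolding children_def by blast+
    then have "y \<in> subleaves E T" using y interior_eq by blast
    then show ?thesis using \<open>x = s\<close> unfolding resize_edges_eq by blast
  qed
qed

lemma contract_rl_path:
  assumes xs: "xs \<in> rl_paths E r"
  shows "contract xs \<in> rl_paths E' r" and "last (contract xs) = last xs"
proof -
  have path: "xs \<noteq> []" "hd xs = r" "walk E xs" "children E (last xs) = {}"
    using xs by (simp_all add: rl_paths_iff)
  have last_outer: "last xs \<notin> inner_nodes" using last_rl_path_not_inner[OF xs] .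
  then show last: "last (contract xs) = last xs"
    unfolding contract_path_def by (intro last_filter_eq path(1)) (simp add: interior_eq)
  obtain xs' where "xs = r # xs'" using path(1,2) by (cases xs) auto
  moreover have "r \<notin> interior E s T" using root_in_subtree unfolding interior_eq by auto
  ultimately have "contract xs = r # contract xs'" unfolding contract_path_def by simp
  then have "contract xs \<noteq> []" "hd (contract xs) = r" by simp_all
  moreover have "children E' (last (contract xs)) = {}"
    using path(4) last_outer root_inner children_resize last by (metis DiffD2)
  ultimately show "contract xs \<in> rl_paths E' r"
    unfolding rl_paths_iff using walk_contract[OF path(3)] by blast
qed

lemma last_rl_path_resize:
  assumes ys: "ys \<in> rl_paths E' r"
  shows "last ys \<in> V - inner_nodes" and "children E (last ys) = {}"
proof -
  have "last ys \<in> V - interior E s T"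
    using ys
  proof (cases rule: last_rl_path_cases)
    case 1
    then show ?thesis using root_in_V root_in_subtree unfolding interior_eq by auto
  next
    case (2 u)
    then show ?thesis using resize_edges_subset no_resize_edge_into_interior by blast
  qed
  moreover have "children E' (last ys) = {}" using ys by (simp add: rl_paths_iff)
  moreover then have "last ys \<noteq> s" using children_resize subleaves_nonempty by auto
  ultimately show "last ys \<in> V - inner_nodes" and "children E (last ys) = {}"
    using children_resize unfolding interior_eq by auto
qed

lemma bij_betw_contract: "bij_betw contract (rl_paths E r) (rl_paths E' r)"
  unfolding bij_betw_def
proof
  show "inj_on contract (rl_paths E r)"
    using contract_rl_path rl_paths_eq_if_last_eq[OF parent_unique] by (metis inj_onI)
  show "contract ` rl_paths E r = rl_paths E' r"
  proof
    show "contract ` rl_paths E r \<subseteq> rl_paths E' r"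
      using contract_rl_path(1) by (rule image_subsetI)
    show "rl_paths E' r \<subseteq> contract ` rl_paths E r"
    proof
      fix ys assume "ys \<in> rl_paths E' r"
      note ys = this last_rl_path_resize[OF this]
      obtain xs where xs: "xs \<noteq> []" "hd xs = r" "last xs = last ys" "walk E xs"
        using rtrancl_imp_walk[OF reachable] ys(2) by blast
      then have "xs \<in> rl_paths E r" using ys(3) by (simp add: rl_paths_iff)
      moreover have "contract xs = ys"
        using rl_paths_eq_if_last_eq[OF parent_unique_resize] contract_rl_path[OF \<open>xs \<in> _\<close>] ys xs
        by metis
      ultimately show "ys \<in> contract ` rl_paths E r" by blast
    qed
  qed
qed

lemma card_rl_paths_resize: "card (rl_paths E' r) = card (rl_paths E r)"
  using bij_betw_same_card[OF bij_betw_contract] by simp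

lemma bij_betw_contract_paths_visiting:
  assumes "W \<inter> interior E s T = {}"
  shows "bij_betw contract (paths_visiting E r W) (paths_visiting E' r W)"
proof -
  have visits: "set (contract xs) \<inter> W = set xs \<inter> W" for xs
    using assms unfolding contract_path_def by auto
  have "contract ` paths_visiting E r W = paths_visiting E' r W"
  proof
    show "contract ` paths_visiting E r W \<subseteq> paths_visiting E' r W"
      using contract_rl_path(1) visits unfolding paths_visiting_def by auto
  next
    show "paths_visiting E' r W \<subseteq> contract ` paths_visiting E r W"
    proof
      fix ys assume ys: "ys \<in> paths_visiting E' r W"
      then obtain xs where "xs \<in> rl_paths E r" "ys = contract xs"
        using bij_betw_imp_surj_on[OF bij_betw_contract] unfolding paths_visiting_def by auto
      then show "ys \<in> contract ` paths_visiting E r W"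
        using ys visits[of xs] unfolding paths_visiting_def by auto
    qed
  qed
  moreover have "inj_on contract (paths_visiting E r W)"
    using bij_betw_imp_inj_on[OF bij_betw_contract] unfolding paths_visiting_def
    by (rule inj_on_subset) auto
  ultimately show ?thesis unfolding bij_betw_def by blast
qed

lemma card_paths_visiting_resize:
  "W \<inter> interior E s T = {} \<Longrightarrow> card (paths_visiting E' r W) = card (paths_visiting E r W)"
  using bij_betw_same_card[OF bij_betw_contract_paths_visiting] by simp

lemma sum_paths_visiting_resize:
  assumes "W \<inter> interior E s T = {}" and "\<forall>xs\<in>rl_paths E r. N' (contract xs) = N xs"
  shows "(\<Sum>ys\<in>paths_visiting E' r W. N' ys) = (\<Sum>xs\<in>paths_visiting E r W. N xs)"
  using sum.reindex_bij_betw[OF bij_betw_contract_paths_visiting[OF assms(1)], of N'] assms(2)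
  unfolding paths_visiting_def by simp

lemma gamma_ratio_resize:
  assumes "w \<notin> interior E s T" and "\<forall>xs\<in>rl_paths E r. N' (contract xs) = N xs"
  shows "gamma_ratio E' r \<alpha> N' w = gamma_ratio E r \<alpha> N w"
proof -
  have w: "{w} \<inter> interior E s T = {}" using assms(1) by simp
  show ?thesis
    unfolding gamma_ratio_def card_rl_paths_resize card_paths_visiting_resize[OF w]
      sum_paths_visiting_resize[OF w assms(2)] by (rule refl)
qed

end

section \<open>Stages under the resize\<close>

locale staged_resize = tree_resize V E r s T
  for V :: "'a set" and E :: "('a \<times> 'a) set" and r :: 'a and s :: 'a and T :: "'a set" +
  fixes stg :: "'a \<Rightarrow> 'b" and lab lab' :: "'a \<times> 'a \<Rightarrow> nat"
  assumes staged_tree: "staged_tree V E r stg lab"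
    and saturated: "saturated E stg T"
    and lab'_eq: "\<forall>e\<in>resize_edges E s T. fst e \<noteq> s \<longrightarrow> lab' e = lab e"
    and lab'_bij: "bij_betw (\<lambda>l. lab' (s, l)) (subleaves E T) {1..card (subleaves E T)}"
begin

lemma labels_bij:
  "v \<in> situations E \<Longrightarrow> bij_betw (\<lambda>w. lab (v, w)) (children E v) {1..card (children E v)}"
  using staged_tree unfolding staged_tree_def by blast

lemma saturated_unique:
  "\<lbrakk>v \<in> inner_nodes; w \<in> situations E; stg w = stg v\<rbrakk> \<Longrightarrow> w = v"
  using saturated unfolding saturated_def by blast

lemma inner_stage: "v \<in> inner_nodes \<Longrightarrow> stage_members E stg (stg v) = {v}"
  unfolding stage_members_def using saturated_unique inner_situation by blast

lemma situations_resize: "situations E' = (situations E - inner_nodes) \<union> {s}"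
  unfolding situations_def children_resize using subleaves_nonempty root_inner by auto

lemma floret_stage: "stage_members E' stg (stg s) = {s}"
  unfolding stage_members_def situations_resize using saturated_unique[OF root_inner] by auto

lemma outer_stage_disjoint:
  assumes "v \<in> situations E - inner_nodes"
  shows "stage_members E stg (stg v) \<inter> inner_nodes = {}"
proof -
  have "w \<notin> inner_nodes" if "w \<in> stage_members E stg (stg v)" for w
    using that assms saturated_unique[of w v] unfolding stage_members_def
    by (metis (mono_tags) DiffD1 DiffD2 mem_Collect_eq)
  then show ?thesis by blast
qed

context
  fixes v assumes v: "v \<in> situations E - inner_nodes"
begin

lemma stage_members_resize_outer: "stage_members E' stg (stg v) = stage_members E stg (stg v)"
proof -
  have outer: "w \<notin> inner_nodes" if "w \<in> situations E" "stg w = stg v" for w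
    using outer_stage_disjoint[OF v] that unfolding stage_members_def by blast
  then have "stg s \<noteq> stg v" using root_inner inner_situation[OF root_inner] by blast
  then show ?thesis using outer unfolding stage_members_def situations_resize by blast
qed

lemma stage_deg_resize_outer: "stage_deg E' stg (stg v) = stage_deg E stg (stg v)"
proof -
  let ?w = "SOME w. w \<in> stage_members E stg (stg v)"
  have "v \<in> stage_members E stg (stg v)" using v unfolding stage_members_def by simp
  then have "?w \<in> stage_members E stg (stg v)" by (rule someI)
  then have "?w \<notin> inner_nodes" using outer_stage_disjoint[OF v] by blast
  moreover have "?w \<noteq> s" using calculation root_inner by blast
  ultimately have "children E' ?w = children E ?w" by (simp only: children_resize if_False)
  then show ?thesis unfolding stage_deg_def stage_members_resize_outer by simp
qed

lemma stage_edges_resize_outer: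
  "stage_edges E' stg lab' (stg v) k = stage_edges E stg lab (stg v) k"
proof -
  have "e \<in> E' \<and> lab' e = k \<longleftrightarrow> e \<in> E \<and> lab e = k"
    if "fst e \<in> stage_members E stg (stg v)" for e
  proof -
    have "fst e \<notin> inner_nodes" "fst e \<noteq> s"
      using that outer_stage_disjoint[OF v] root_inner by auto
    then show ?thesis using lab'_eq unfolding resize_edges_eq by auto
  qed
  then show ?thesis unfolding stage_edges_def stage_members_resize_outer by blast
qed

lemma stage_edges_outer_subset: "stage_edges E stg lab (stg v) k \<subseteq> E \<inter> E'"
  using stage_edges_resize_outer[of k] unfolding stage_edges_def by blast

lemma alpha_jk_resize_outer: "alpha_jk E' r stg lab' \<alpha> (stg v) k = alpha_jk E r stg lab \<alpha> (stg v) k"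
proof -
  have "card (paths_through E' r e) = card (paths_through E r e)"
    if "e \<in> stage_edges E stg lab (stg v) k" for e
  proof -
    have "e \<in> E" "e \<in> E'" using that stage_edges_outer_subset by auto
    moreover have "{snd e} \<inter> interior E s T = {}"
      using \<open>e \<in> E'\<close> no_resize_edge_into_interior by (cases e) auto
    ultimately show ?thesis
      using paths_through_eq_paths_visiting[OF parent_unique] card_paths_visiting_resize
        paths_through_eq_paths_visiting[OF parent_unique_resize] by simp
  qed
  then show ?thesis
    unfolding alpha_jk_def stage_edges_resize_outer card_rl_paths_resize by simp
qed

lemma count_n_resize_outer:
  assumes "\<forall>xs\<in>rl_paths E r. N' (contract xs) = N xs"
  shows "count_n E' r stg lab' N' (stg v) k = count_n E r stg lab N (stg v) k"
proof -
  have edges: "stage_edges E stg lab (stg v) k \<subseteq> E" "stage_edges E stg lab (stg v) k \<subseteq> E'"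
    using stage_edges_outer_subset by auto
  then have "snd ` stage_edges E stg lab (stg v) k \<inter> interior E s T = {}"
    using no_resize_edge_into_interior by force
  then show ?thesis
    unfolding count_n_def stage_edges_resize_outer
      paths_meeting_edges_eq_paths_visiting[OF parent_unique edges(1)]
      paths_meeting_edges_eq_paths_visiting[OF parent_unique_resize edges(2)]
    by (rule sum_paths_visiting_resize[OF _ assms])
qed

lemma stage_factor_resize_outer:
  assumes "\<forall>xs\<in>rl_paths E r. N' (contract xs) = N xs"
  shows "stage_factor E' r stg lab' \<alpha> N' (stg v) = stage_factor E r stg lab \<alpha> N (stg v)"
  unfolding stage_factor_def stage_deg_resize_outer alpha_jk_resize_outer
    count_n_resize_outer[OF assms] ..

end

context
  fixes \<alpha> :: real and N N' :: "'a list \<Rightarrow> nat"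
  assumes pos: "\<alpha> > 0" and N'_contract: "\<forall>xs\<in>rl_paths E r. N' (contract xs) = N xs"
begin

lemma prod_inner_stage_factors:
  "(\<Prod>j\<in>stg ` inner_nodes. stage_factor E r stg lab \<alpha> N j)
    = stage_factor E' r stg lab' \<alpha> N' (stg s)"
proof -
  let ?G = "gamma_ratio E r \<alpha> N"
  have "inj_on stg inner_nodes" using saturated_unique inner_situation by (meson inj_onI)
  then have "(\<Prod>j\<in>stg ` inner_nodes. stage_factor E r stg lab \<alpha> N j)
      = (\<Prod>v\<in>inner_nodes. stage_factor E r stg lab \<alpha> N (stg v))"
    by (rule prod.reindex[unfolded comp_def])
  also have "\<dots> = (\<Prod>v\<in>inner_nodes. inverse (?G v) * (\<Prod>w\<in>children E v. ?G w))"
    using stage_factor_singleton[OF parent_unique finite_rl_paths_E _ inner_stage labels_bij]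
      inner_situation by simp
  also have "\<dots> = inverse (?G s) * (\<Prod>l\<in>subleaves E T. ?G l)"
  proof (rule prod_telescope_inner)
    fix v assume "v \<in> inner_nodes"
    then have "paths_visiting E r {v} \<noteq> {}"
      using paths_visiting_nonempty[OF event_tree] subtree_subset by blast
    then show "?G v \<noteq> 0" using gamma_ratio_pos[OF pos finite_rl_paths_E] by (metis less_irrefl)
  qed
  also have "\<dots> = stage_factor E' r stg lab' \<alpha> N' (stg s)"
  proof -
    have "s \<in> situations E'" using situations_resize by simp
    moreover have "bij_betw (\<lambda>w. lab' (s, w)) (children E' s) {1..card (children E' s)}"
      using lab'_bij children_resize by simp
    moreover have "w \<notin> interior E s T" if "w = s \<or> w \<in> subleaves E T" for w
      using that interior_eq by auto
    ultimately show ?thesis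
      using stage_factor_singleton[OF parent_unique_resize finite_rl_paths_resize _ floret_stage]
        gamma_ratio_resize[OF _ N'_contract] children_resize
      by simp
  qed
  finally show ?thesis .
qed

lemma BDepu_resize: "BDepu E r stg lab \<alpha> N = BDepu E' r stg lab' \<alpha> N'"
proof -
  let ?F = "stage_factor E r stg lab \<alpha> N" and ?F' = "stage_factor E' r stg lab' \<alpha> N'"
  let ?outer = "stg ` (situations E - inner_nodes)"
  have finite: "finite ?outer" "finite (stg ` inner_nodes)"
    using finite_V finite_subtree edges_subset unfolding situations_def children_def
    by (auto intro: finite_subset)
  have "stages E stg = ?outer \<union> stg ` inner_nodes"
    unfolding stages_def using inner_situation by auto
  moreover have "?outer \<inter> stg ` inner_nodes = {}" using saturated_unique by blast
  ultimately have "BDepu E r stg lab \<alpha> N = (\<Prod>j\<in>?outer. ?F j) * (\<Prod>j\<in>stg ` inner_nodes. ?F j)"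
    unfolding BDepu_eq_prod_stage_factor using finite by (simp add: prod.union_disjoint)
  also have "(\<Prod>j\<in>?outer. ?F j) = (\<Prod>j\<in>?outer. ?F' j)"
  proof (rule prod.cong[OF refl])
    fix j assume "j \<in> ?outer"
    then obtain v where v: "v \<in> situations E - inner_nodes" and j: "j = stg v" by blast
    show "?F j = ?F' j" unfolding j by (rule stage_factor_resize_outer[OF v N'_contract, symmetric])
  qed
  also note prod_inner_stage_factors
  also have "(\<Prod>j\<in>?outer. ?F' j) * ?F' (stg s) = BDepu E' r stg lab' \<alpha> N'"
  proof -
    have "stages E' stg = insert (stg s) ?outer" unfolding stages_def situations_resize by auto
    moreover have "stg s \<notin> ?outer"
    proof
      assume "stg s \<in> ?outer"
      then obtain w where "w \<in> situations E - inner_nodes" "stg w = stg s" by force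
      then show False using saturated_unique[OF root_inner, of w] root_inner by (metis DiffD1 DiffD2)
    qed
    ultimately show ?thesis
      unfolding BDepu_eq_prod_stage_factor using finite by (simp add: mult.commute)
  qed
  finally show ?thesis .
qed

end

end

theorem lemma4:
  fixes V :: "'a set" and E :: "('a \<times> 'a) set" and r :: 'a
    and stg :: "'a \<Rightarrow> 'b" and lab lab' :: "'a \<times> 'a \<Rightarrow> nat"
    and s :: 'a and T :: "'a set" and \<alpha> :: real
    and N N' :: "'a list \<Rightarrow> nat"
  assumes "staged_tree V E r stg lab"
    and "square_free E r stg"
    and "subtree V E s T"
    and "saturated E stg T"
    and "\<forall>e\<in>resize_edges E s T. fst e \<noteq> s \<longrightarrow> lab' e = lab e"
    and "bij_betw (\<lambda>l. lab' (s, l)) (subleaves E T) {1..card (subleaves E T)}"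
    and "\<alpha> > 0"
    and "\<forall>xs\<in>rl_paths E r. N' (contract_path E s T xs) = N xs"
  shows "BDepu E r stg lab \<alpha> N = BDepu (resize_edges E s T) r stg lab' \<alpha> N'"
proof -
  have "event_tree V E r" using assms(1) unfolding staged_tree_def by blast
  then interpret staged_resize V E r s T stg lab lab'
    using assms(1,3-6) by unfold_locales
  show ?thesis using assms(7,8) by (rule BDepu_resize)
qed

end
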